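(* Let $H_0$ be a lattice Hamiltonian satisfying the Lieb–Robinson bound described in the context, let $\gamma>0$, $q>0$, and let $f_q(t)=\exp(-t^2/2q)\,[\exp(i3t/4)-\exp(-i3t/4)]/(it)$. If $O$ is supported on a set $A$, then for every $l$ there is an operator $W^l_{\gamma,f_q}(O)$ supported on $b_l(A)$ with $$\Vert W_{\gamma,f_q}(O)-W^l_{\gamma,f_q}(O)\Vert\le\Bigl(C\frac{q}{l\gamma/v_{LR}}\exp[-(l\gamma/v_{LR})^2/2q]+C\sqrt q\, g(l)|A|\Bigr)\Vert O\Vert,$$ where $C$ is a numerical constant.
   Context: Finite lattice with metric ${\rm dist}$, finite-dimensional site Hilbert spaces; $H_0=\sum_Z H_Z$ with $H_Z$ Hermitian supported on $Z$, ${\rm diam}(Z)\le R$, $\sup_i\sum_{Z\ni i}\Vert H_Z\Vert\le J$. $b_l(A)$ = sites within distance $l$ of $A$, $|A|$ = cardinality. Lieb–Robinson bound: there are $v_{LR}>0$ and a function $g$ (decaying faster than exponentially in $l/R$) such that for any $O$ supported on $A$, any $l$ and any $|t|\le l/v_{LR}$, $e^{iH_0t}Oe^{-iH_0t}$ can be approximated by an operator supported on $b_l(A)$ within operator-norm error $\frac{v_{LR}|t|}{l}g(l)|A|\Vert O\Vert$. For a filter function $G$, $W_{\gamma,G}(O)=\gamma\int dt\,G(\gamma t)e^{iH_0t}Oe^{-iH_0t}$. *)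

theory Defs
  imports "HOL-Analysis.Analysis"
begin

text \<open>Sites are natural numbers (any finite
lattice can be enumerated), the lattice is a finite set Lam of sites with a metric dd,
site i carries the Hilbert space C^(dm i). The full Hilbert space has the product
basis of configurations sigma with sigma i < dm i for i in Lam (and sigma i = 0 outside Lam).
Operators are matrices in that basis.\<close>

type_synonym qop = "(nat \<Rightarrow> nat) \<Rightarrow> (nat \<Rightarrow> nat) \<Rightarrow> complex"

definition confs :: "nat set \<Rightarrow> (nat \<Rightarrow> nat) \<Rightarrow> (nat \<Rightarrow> nat) set" where
  "confs Lam dm = {\<sigma>. (\<forall>i\<in>Lam. \<sigma> i < dm i) \<and> (\<forall>i. i \<notin> Lam \<longrightarrow> \<sigma> i = 0)}"

definition mmult :: "(nat \<Rightarrow> nat) set \<Rightarrow> qop \<Rightarrow> qop \<Rightarrow> qop" where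
  "mmult S M N = (\<lambda>a b. \<Sum>c\<in>S. M a c * N c b)"

definition mid :: qop where
  "mid = (\<lambda>a b. if a = b then 1 else 0)"

fun mpow :: "(nat \<Rightarrow> nat) set \<Rightarrow> qop \<Rightarrow> nat \<Rightarrow> qop" where
  "mpow S M 0 = mid"
| "mpow S M (Suc n) = mmult S M (mpow S M n)"

definition mexp :: "(nat \<Rightarrow> nat) set \<Rightarrow> qop \<Rightarrow> qop" where
  "mexp S M = (\<lambda>a b. \<Sum>n. mpow S M n a b / of_nat (fact n))"

definition mvec :: "(nat \<Rightarrow> nat) set \<Rightarrow> qop \<Rightarrow> ((nat \<Rightarrow> nat) \<Rightarrow> complex) \<Rightarrow> ((nat \<Rightarrow> nat) \<Rightarrow> complex)" where
  "mvec S M x = (\<lambda>a. \<Sum>b\<in>S. M a b * x b)"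

definition vnorm :: "(nat \<Rightarrow> nat) set \<Rightarrow> ((nat \<Rightarrow> nat) \<Rightarrow> complex) \<Rightarrow> real" where
  "vnorm S x = sqrt (\<Sum>a\<in>S. (cmod (x a))\<^sup>2)"

definition opnorm :: "(nat \<Rightarrow> nat) set \<Rightarrow> qop \<Rightarrow> real" where
  "opnorm S M = Sup {vnorm S (mvec S M x) | x. vnorm S x \<le> 1}"

definition hermitian :: "(nat \<Rightarrow> nat) set \<Rightarrow> qop \<Rightarrow> bool" where
  "hermitian S M \<longleftrightarrow> (\<forall>a\<in>S. \<forall>b\<in>S. M a b = cnj (M b a))"

text \<open>M is supported on A: M = M_A \<otimes> identity on the complement of A in Lam.\<close>
definition supported_on :: "nat set \<Rightarrow> (nat \<Rightarrow> nat) \<Rightarrow> nat set \<Rightarrow> qop \<Rightarrow> bool" where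
  "supported_on Lam dm A M \<longleftrightarrow>
     (\<forall>\<sigma>\<in>confs Lam dm. \<forall>\<tau>\<in>confs Lam dm.
        (\<exists>i\<in>Lam - A. \<sigma> i \<noteq> \<tau> i) \<longrightarrow> M \<sigma> \<tau> = 0) \<and>
     (\<forall>\<sigma>\<in>confs Lam dm. \<forall>\<tau>\<in>confs Lam dm. \<forall>\<sigma>'\<in>confs Lam dm. \<forall>\<tau>'\<in>confs Lam dm.
        (\<forall>i\<in>A. \<sigma> i = \<sigma>' i \<and> \<tau> i = \<tau>' i) \<and>
        (\<forall>i\<in>Lam - A. \<sigma> i = \<tau> i \<and> \<sigma>' i = \<tau>' i) \<longrightarrow> M \<sigma> \<tau> = M \<sigma>' \<tau>')"

definition bnbhd :: "nat set \<Rightarrow> (nat \<Rightarrow> nat \<Rightarrow> real) \<Rightarrow> real \<Rightarrow> nat set \<Rightarrow> nat set" where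
  "bnbhd Lam dd l A = {j\<in>Lam. \<exists>i\<in>A. dd i j \<le> l}"

definition metric_lattice :: "nat set \<Rightarrow> (nat \<Rightarrow> nat \<Rightarrow> real) \<Rightarrow> (nat \<Rightarrow> nat) \<Rightarrow> bool" where
  "metric_lattice Lam dd dm \<longleftrightarrow> finite Lam \<and> (\<forall>i\<in>Lam. dm i \<ge> 1) \<and>
     (\<forall>i\<in>Lam. \<forall>j\<in>Lam. dd i j \<ge> 0 \<and> dd i j = dd j i \<and> (dd i j = 0 \<longleftrightarrow> i = j)) \<and>
     (\<forall>i\<in>Lam. \<forall>j\<in>Lam. \<forall>k\<in>Lam. dd i k \<le> dd i j + dd j k)"

definition local_hamiltonian ::
  "nat set \<Rightarrow> (nat \<Rightarrow> nat \<Rightarrow> real) \<Rightarrow> (nat \<Rightarrow> nat) \<Rightarrow> nat set set \<Rightarrow> (nat set \<Rightarrow> qop) \<Rightarrow> real \<Rightarrow> real \<Rightarrow> bool" where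
  "local_hamiltonian Lam dd dm Zs HZ R J \<longleftrightarrow>
     Zs \<subseteq> Pow Lam \<and>
     (\<forall>Z\<in>Zs. hermitian (confs Lam dm) (HZ Z) \<and> supported_on Lam dm Z (HZ Z) \<and>
              (\<forall>i\<in>Z. \<forall>j\<in>Z. dd i j \<le> R)) \<and>
     (\<forall>i\<in>Lam. (\<Sum>Z\<in>{Z\<in>Zs. i \<in> Z}. opnorm (confs Lam dm) (HZ Z)) \<le> J)"

definition ham_sum :: "nat set \<Rightarrow> (nat \<Rightarrow> nat) \<Rightarrow> nat set set \<Rightarrow> (nat set \<Rightarrow> qop) \<Rightarrow> qop" where
  "ham_sum Lam dm Zs HZ = (\<lambda>a b. \<Sum>Z\<in>Zs. HZ Z a b)"

definition heis :: "(nat \<Rightarrow> nat) set \<Rightarrow> qop \<Rightarrow> real \<Rightarrow> qop \<Rightarrow> qop" where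
  "heis S H t X = mmult S (mmult S (mexp S (\<lambda>a b. \<i> * of_real t * H a b)) X)
                          (mexp S (\<lambda>a b. - \<i> * of_real t * H a b))"

definition mdiff :: "qop \<Rightarrow> qop \<Rightarrow> qop" where
  "mdiff M N = (\<lambda>a b. M a b - N a b)"

definition lieb_robinson_bound ::
  "nat set \<Rightarrow> (nat \<Rightarrow> nat \<Rightarrow> real) \<Rightarrow> (nat \<Rightarrow> nat) \<Rightarrow> qop \<Rightarrow> real \<Rightarrow> (real \<Rightarrow> real) \<Rightarrow> bool" where
  "lieb_robinson_bound Lam dd dm H v g \<longleftrightarrow>
     (\<forall>A X l t. A \<subseteq> Lam \<longrightarrow> supported_on Lam dm A X \<longrightarrow> l > 0 \<longrightarrow> \<bar>t\<bar> \<le> l / v \<longrightarrow>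
        (\<exists>X'. supported_on Lam dm (bnbhd Lam dd l A) X' \<and>
          opnorm (confs Lam dm) (mdiff (heis (confs Lam dm) H t X) X')
            \<le> v * \<bar>t\<bar> / l * g l * real (card A) * opnorm (confs Lam dm) X))"

definition faster_than_exp :: "(real \<Rightarrow> real) \<Rightarrow> real \<Rightarrow> bool" where
  "faster_than_exp g R \<longleftrightarrow> (\<forall>\<kappa>>0. ((\<lambda>l. g l * exp (\<kappa> * l / R)) \<longlongrightarrow> 0) at_top)"

definition Wfilt :: "(nat \<Rightarrow> nat) set \<Rightarrow> qop \<Rightarrow> real \<Rightarrow> (real \<Rightarrow> complex) \<Rightarrow> qop \<Rightarrow> qop" where
  "Wfilt S H \<gamma> G X = (\<lambda>a b. of_real \<gamma> * integral UNIV (\<lambda>t. G (\<gamma> * t) * heis S H t X a b))"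

definition fq :: "real \<Rightarrow> real \<Rightarrow> complex" where
  "fq q t = of_real (exp (- t\<^sup>2 / (2 * q))) *
     (exp (\<i> * of_real (3 * t / 4)) - exp (- (\<i> * of_real (3 * t / 4)))) / (\<i> * of_real t)"

end

theory Submission
  imports Defs "HOL-Probability.Distributions" "HOL-Real_Asymp.Real_Asymp"
begin

(* The filtered operator W is the time average of the Heisenberg evolution O(t) = e^(iHt) O e^(-iHt)
   against the kernel gamma f_q(gamma t), where |f_q(s)| <= 3/2 exp(-s^2/2q).  Split the time axis at
   T = l/v.  For |t| <= T the Lieb-Robinson bound approximates O(t) within g(l)|A| |O| by operators
   supported on b_l(A); as t -> O(t) is norm continuous, finitely many of them used on a fine grid
   suffice, which makes the approximating integral a well-defined operator supported on b_l(A).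
   For |t| > T we approximate by 0 and, O(t) having norm |O|, pay only the Gaussian tail of the kernel,
   O(q/(gamma T)) exp(-(gamma T)^2/2q).  The kernel has total mass O(sqrt q), which multiplies the
   Lieb-Robinson error. *)

section \<open>Matrix powers and the matrix exponential\<close>

lemma mpow_mult_const: "mpow S (\<lambda>a b. c * M a b) n = (\<lambda>a b. c ^ n * mpow S M n a b)"
proof (induction n)
  case 0 then show ?case by (simp add: mid_def)
next
  case (Suc n) then show ?case by (intro ext) (simp add: mmult_def sum_distrib_left mult_ac)
qed

lemma mmult_mid_left: "finite S \<Longrightarrow> a \<in> S \<Longrightarrow> mmult S mid P a b = P a b"
proof -
  assume "finite S" "a \<in> S"
  have "mmult S mid P a b = (\<Sum>c\<in>S. if a = c then P c b else 0)"
    unfolding mmult_def mid_def by (rule sum.cong) auto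
  then show ?thesis using \<open>finite S\<close> \<open>a \<in> S\<close> by simp
qed

lemma mmult_mid_right: "finite S \<Longrightarrow> b \<in> S \<Longrightarrow> mmult S P mid a b = P a b"
proof -
  assume "finite S" "b \<in> S"
  have "mmult S P mid a b = (\<Sum>c\<in>S. if c = b then P a c else 0)"
    unfolding mmult_def mid_def by (rule sum.cong) auto
  then show ?thesis using \<open>finite S\<close> \<open>b \<in> S\<close> by simp
qed

lemma mmult_mpow_mpow:
  assumes "finite S" "a \<in> S"
  shows "mmult S (mpow S M k) (mpow S M m) a b = mpow S M (k + m) a b"
  using assms(2)
proof (induction k arbitrary: a)
  case 0 then show ?case by (simp add: mmult_mid_left assms(1))
next
  case (Suc k)
  have "mmult S (mpow S M (Suc k)) (mpow S M m) a b
      = (\<Sum>d\<in>S. M a d * (\<Sum>c\<in>S. mpow S M k d c * mpow S M m c b))"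
    by (simp add: mmult_def sum_distrib_left sum_distrib_right mult_ac) (rule sum.swap)
  also have "\<dots> = mpow S M (Suc k + m) a b"
    using Suc.IH by (simp add: mmult_def)
  finally show ?case .
qed

lemma mpow_1: "finite S \<Longrightarrow> b \<in> S \<Longrightarrow> mpow S M 1 a b = M a b"
  by (simp add: mmult_mid_right)

lemma norm_mpow_le:
  assumes "finite S" "0 \<le> B" "\<And>a c. a \<in> S \<Longrightarrow> c \<in> S \<Longrightarrow> cmod (M a c) \<le> B" "a \<in> S"
  shows "cmod (mpow S M n a b) \<le> (real (card S) * B) ^ n"
  using assms(4)
proof (induction n arbitrary: a)
  case 0 then show ?case by (simp add: mid_def)
next
  case (Suc n)
  have "cmod (mpow S M (Suc n) a b) \<le> (\<Sum>c\<in>S. cmod (M a c) * cmod (mpow S M n c b))"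
    unfolding mpow.simps mmult_def by (rule order_trans[OF norm_sum]) (simp add: norm_mult)
  also have "\<dots> \<le> (\<Sum>c\<in>S. B * (real (card S) * B) ^ n)"
    by (intro sum_mono mult_mono) (auto intro: assms(3) Suc simp: assms(2))
  also have "\<dots> = (real (card S) * B) ^ Suc n" by (simp add: mult_ac)
  finally show ?case .
qed

lemma cnj_mpow_hermitian:
  assumes "finite S" "hermitian S M" "a \<in> S" "b \<in> S"
  shows "cnj (mpow S M n a b) = mpow S M n b a"
  using assms(3,4)
proof (induction n arbitrary: a b)
  case 0 then show ?case by (simp add: mid_def)
next
  case (Suc n)
  have "cnj (mpow S M (Suc n) a b) = (\<Sum>c\<in>S. mpow S M n b c * mpow S M 1 c a)"
    unfolding mpow.simps mmult_def cnj_sum complex_cnj_mult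
  proof (rule sum.cong[OF refl])
    fix c assume "c \<in> S"
    then have "cnj (M a c) = M c a" "cnj (mpow S M n c b) = mpow S M n b c"
      using assms(2) Suc unfolding hermitian_def by (metis complex_cnj_cnj)+
    then show "cnj (M a c) * cnj (mpow S M n c b) = mpow S M n b c * mpow S M 1 c a"
      using mpow_1[OF assms(1) Suc.prems(1)] by simp
  qed
  also have "\<dots> = mpow S M (Suc n) b a"
    using mmult_mpow_mpow[OF assms(1) Suc.prems(2), of M n 1] by (simp add: mmult_def)
  finally show ?case .
qed

lemma mexp_mult_const_series:
  "mexp S (\<lambda>a b. z * H a b) a b = (\<Sum>n. mpow S H n a b / fact n * z ^ n)"
  unfolding mexp_def mpow_mult_const by (simp add: mult_ac)

lemma summable_norm_mexp_series:
  assumes "finite S" "a \<in> S"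
  shows "summable (\<lambda>n. norm (mpow S H n a b / fact n * z ^ n))"
proof -
  define B where "B = (\<Sum>a\<in>S. \<Sum>c\<in>S. cmod (H a c))"
  have B: "0 \<le> B" unfolding B_def by (simp add: sum_nonneg)
  have "cmod (H a c) \<le> B" if "a \<in> S" "c \<in> S" for a c
  proof -
    have "cmod (H a c) \<le> (\<Sum>c\<in>S. cmod (H a c))"
      using that assms(1) by (intro member_le_sum) auto
    also have "\<dots> \<le> B"
      unfolding B_def using that assms(1) by (intro member_le_sum[of a]) (auto intro: sum_nonneg)
    finally show ?thesis .
  qed
  then have bound: "cmod (mpow S H n a b) \<le> (real (card S) * B) ^ n" for n
    using norm_mpow_le[OF assms(1) B] assms(2) by blast
  have "norm (norm (mpow S H n a b / fact n * z ^ n)) \<le> inverse (fact n) * (real (card S) * B * cmod z) ^ n" for n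
    using mult_right_mono[OF bound[of n], of "cmod z ^ n"]
    by (simp add: norm_mult norm_divide norm_power power_mult_distrib divide_simps mult_ac)
  then show ?thesis
    by (intro summable_comparison_test'[where N=0, OF summable_exp]) auto
qed

lemma summable_mexp_series:
  "finite S \<Longrightarrow> a \<in> S \<Longrightarrow> summable (\<lambda>n. mpow S H n a b / fact n * z ^ n)"
  by (rule summable_norm_cancel[OF summable_norm_mexp_series])

lemma exp_series_cauchy_product_coeff:
  fixes z w :: complex
  shows "(\<Sum>k\<le>N. z ^ k / fact k * (w ^ (N - k) / fact (N - k))) = (z + w) ^ N / fact N"
proof -
  have "(z + w) ^ N / fact N = (\<Sum>k\<le>N. of_nat (N choose k) * z ^ k * w ^ (N - k) / fact N)"
    by (simp add: binomial_ring sum_divide_distrib)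
  also have "\<dots> = (\<Sum>k\<le>N. z ^ k / fact k * (w ^ (N - k) / fact (N - k)))"
    by (intro sum.cong refl) (simp add: binomial_fact field_simps)
  finally show ?thesis by simp
qed

lemma mmult_mexp_mexp:
  assumes S: "finite S" and a: "a \<in> S"
  shows "mmult S (mexp S (\<lambda>a b. z * H a b)) (mexp S (\<lambda>a b. w * H a b)) a b
       = mexp S (\<lambda>a b. (z + w) * H a b) a b"
proof -
  define \<alpha> where "\<alpha> c n = mpow S H n a c / fact n * z ^ n" for c n
  define \<beta> where "\<beta> c n = mpow S H n c b / fact n * w ^ n" for c n
  have sa: "summable (\<lambda>n. norm (\<alpha> c n))" for c
    unfolding \<alpha>_def by (rule summable_norm_mexp_series[OF S a])
  have sb: "summable (\<lambda>n. norm (\<beta> c n))" if "c \<in> S" for c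
    unfolding \<beta>_def by (rule summable_norm_mexp_series[OF S that])
  have coeff: "(\<Sum>c\<in>S. \<Sum>k\<le>N. \<alpha> c k * \<beta> c (N - k)) = mpow S H N a b / fact N * (z + w) ^ N" for N
  proof -
    have "(\<Sum>c\<in>S. \<Sum>k\<le>N. \<alpha> c k * \<beta> c (N - k))
        = (\<Sum>k\<le>N. z ^ k / fact k * (w ^ (N - k) / fact (N - k)) *
              mmult S (mpow S H k) (mpow S H (N - k)) a b)"
      unfolding \<alpha>_def \<beta>_def mmult_def by (subst sum.swap) (simp add: sum_distrib_left mult_ac)
    also have "\<dots> = (\<Sum>k\<le>N. z ^ k / fact k * (w ^ (N - k) / fact (N - k))) * mpow S H N a b"
      by (simp add: mmult_mpow_mpow[OF S a] sum_distrib_right)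
    also have "\<dots> = (z + w) ^ N / fact N * mpow S H N a b"
      by (simp only: exp_series_cauchy_product_coeff)
    finally show ?thesis by simp
  qed
  have "mmult S (mexp S (\<lambda>a b. z * H a b)) (mexp S (\<lambda>a b. w * H a b)) a b
      = (\<Sum>c\<in>S. (\<Sum>n. \<alpha> c n) * (\<Sum>n. \<beta> c n))"
    by (simp add: mmult_def mexp_mult_const_series \<alpha>_def \<beta>_def)
  also have "\<dots> = (\<Sum>c\<in>S. \<Sum>N. \<Sum>k\<le>N. \<alpha> c k * \<beta> c (N - k))"
    by (intro sum.cong refl Cauchy_product sa sb)
  also have "\<dots> = (\<Sum>N. \<Sum>c\<in>S. \<Sum>k\<le>N. \<alpha> c k * \<beta> c (N - k))"
    by (intro suminf_sum[symmetric] summable_Cauchy_product sa sb)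
  also have "\<dots> = mexp S (\<lambda>a b. (z + w) * H a b) a b"
    by (simp only: coeff mexp_mult_const_series)
  finally show ?thesis .
qed

lemma mexp_zero: "mexp S (\<lambda>a b. 0 * H a b) a b = mid a b"
  unfolding mexp_mult_const_series powser_zero by simp

lemma cnj_mexp_hermitian:
  assumes S: "finite S" and h: "hermitian S H" and a: "a \<in> S" and b: "b \<in> S"
  shows "cnj (mexp S (\<lambda>a b. z * H a b) a b) = mexp S (\<lambda>a b. cnj z * H a b) b a"
proof -
  have "(\<lambda>n. cnj (mpow S H n a b / fact n * z ^ n)) sums cnj (mexp S (\<lambda>a b. z * H a b) a b)"
    unfolding sums_cnj mexp_mult_const_series by (rule summable_sums[OF summable_mexp_series[OF S a]])
  then show ?thesis
    by (simp add: mexp_mult_const_series cnj_mpow_hermitian[OF S h a b] sums_iff)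
qed

section \<open>Vector and operator norms\<close>

lemma vnorm_nonneg: "0 \<le> vnorm S x"
  unfolding vnorm_def by (simp add: sum_nonneg)

lemma vnorm_eq_L2_set: "vnorm S x = L2_set (\<lambda>a. cmod (x a)) S"
  by (simp add: vnorm_def L2_set_def)

lemma of_real_vnorm_squared: "complex_of_real ((vnorm S x)\<^sup>2) = (\<Sum>a\<in>S. cnj (x a) * x a)"
proof -
  have "complex_of_real ((vnorm S x)\<^sup>2) = (\<Sum>a\<in>S. complex_of_real ((cmod (x a))\<^sup>2))"
    unfolding vnorm_def by (simp add: sum_nonneg)
  also have "\<dots> = (\<Sum>a\<in>S. cnj (x a) * x a)"
    by (simp only: complex_norm_square mult.commute)
  finally show ?thesis .
qed

lemma vnorm_eqI_of_real_squared:
  assumes "(\<Sum>a\<in>S. cnj (x a) * x a) = (\<Sum>a\<in>S. cnj (y a) * y a)"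
  shows "vnorm S x = vnorm S y"
  using assms of_real_vnorm_squared[of S] vnorm_nonneg[of S]
  by (metis of_real_eq_iff power2_eq_iff_nonneg)

lemma vnorm_mvec_mexp_imaginary:
  assumes S: "finite S" and h: "hermitian S H" and z: "cnj z = - z"
  shows "vnorm S (mvec S (mexp S (\<lambda>a b. z * H a b)) x) = vnorm S x"
proof (rule vnorm_eqI_of_real_squared)
  define U where "U = mexp S (\<lambda>a b. z * H a b)"
  have unitary: "(\<Sum>a\<in>S. cnj (U a b) * U a b') = mid b b'" if "b \<in> S" "b' \<in> S" for b b'
  proof -
    have "(\<Sum>a\<in>S. cnj (U a b) * U a b') = mmult S (mexp S (\<lambda>a b. (- z) * H a b)) U b b'"
      unfolding mmult_def U_def using that cnj_mexp_hermitian[OF S h _ that(1), of _ z] z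
      by (intro sum.cong) auto
    also have "\<dots> = mid b b'"
      unfolding U_def mmult_mexp_mexp[OF S that(1)] using mexp_zero[of S H] by simp
    finally show ?thesis .
  qed
  have "(\<Sum>a\<in>S. cnj (mvec S U x a) * mvec S U x a)
      = (\<Sum>b\<in>S. \<Sum>b'\<in>S. cnj (x b) * x b' * (\<Sum>a\<in>S. cnj (U a b) * U a b'))"
  proof -
    have "(\<Sum>a\<in>S. cnj (mvec S U x a) * mvec S U x a)
        = (\<Sum>a\<in>S. \<Sum>b\<in>S. \<Sum>b'\<in>S. cnj (x b) * x b' * (cnj (U a b) * U a b'))"
      by (simp add: mvec_def sum_distrib_left sum_distrib_right mult_ac)
    also have "\<dots> = (\<Sum>b\<in>S. \<Sum>b'\<in>S. cnj (x b) * x b' * (\<Sum>a\<in>S. cnj (U a b) * U a b'))"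
      by (subst sum.swap, rule sum.cong[OF refl], subst sum.swap) (simp add: sum_distrib_left)
    finally show ?thesis .
  qed
  also have "\<dots> = (\<Sum>b\<in>S. \<Sum>b'\<in>S. if b' = b then cnj (x b) * x b' else 0)"
    by (intro sum.cong refl) (auto simp: unitary mid_def)
  also have "\<dots> = (\<Sum>b\<in>S. cnj (x b) * x b)"
    using S by simp
  finally show "(\<Sum>a\<in>S. cnj (mvec S U x a) * mvec S U x a) = (\<Sum>b\<in>S. cnj (x b) * x b)" .
qed

lemma norm_le_vnorm: "finite S \<Longrightarrow> a \<in> S \<Longrightarrow> cmod (x a) \<le> vnorm S x"
  unfolding vnorm_eq_L2_set by (rule member_le_L2_set)

lemma vnorm_cong: "(\<And>a. a \<in> S \<Longrightarrow> x a = y a) \<Longrightarrow> vnorm S x = vnorm S y"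
  unfolding vnorm_def by (simp cong: sum.cong)

lemma vnorm_zero [simp]: "vnorm S (\<lambda>a. 0) = 0"
  by (simp add: vnorm_def)

lemma vnorm_add_le: "vnorm S (\<lambda>a. x a + y a) \<le> vnorm S x + vnorm S y"
  unfolding vnorm_eq_L2_set
  by (rule order_trans[OF L2_set_mono L2_set_triangle_ineq]) (auto simp: norm_triangle_ineq)

lemma vnorm_mult_const: "vnorm S (\<lambda>a. c * x a) = cmod c * vnorm S x"
  unfolding vnorm_eq_L2_set by (simp add: L2_set_right_distrib norm_mult)

lemma vnorm_le_sum: "vnorm S x \<le> (\<Sum>a\<in>S. cmod (x a))"
  unfolding vnorm_eq_L2_set by (rule L2_set_le_sum) simp

lemma norm_sum_cnj_mult_le_vnorm: "cmod (\<Sum>a\<in>S. cnj (x a) * y a) \<le> vnorm S x * vnorm S y"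
  unfolding vnorm_eq_L2_set
  using L2_set_mult_ineq[of "\<lambda>a. cmod (x a)" "\<lambda>a. cmod (y a)" S]
  by (intro order_trans[OF norm_sum]) (simp add: norm_mult)

lemma mvec_mult_const_right: "mvec S M (\<lambda>b. c * x b) = (\<lambda>a. c * mvec S M x a)"
  by (simp add: mvec_def sum_distrib_left mult_ac)

lemma mvec_mult_const_left: "mvec S (\<lambda>a b. c * M a b) x = (\<lambda>a. c * mvec S M x a)"
  by (simp add: mvec_def sum_distrib_left mult_ac)

lemma mvec_add_left: "mvec S (\<lambda>a b. M a b + N a b) x = (\<lambda>a. mvec S M x a + mvec S N x a)"
  by (simp add: mvec_def distrib_right sum.distrib)

lemma mvec_mmult: "mvec S (mmult S M N) x = mvec S M (mvec S N x)"
  unfolding mvec_def mmult_def sum_distrib_right sum_distrib_left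
  by (intro ext, subst sum.swap) (simp add: mult_ac)

lemma vnorm_mvec_le_sum:
  assumes "finite S"
  shows "vnorm S (mvec S M x) \<le> (\<Sum>a\<in>S. \<Sum>b\<in>S. cmod (M a b)) * vnorm S x"
proof -
  have "cmod (mvec S M x a) \<le> (\<Sum>b\<in>S. cmod (M a b) * vnorm S x)" for a
    unfolding mvec_def using norm_le_vnorm[OF assms]
    by (intro order_trans[OF norm_sum] sum_mono) (simp add: norm_mult mult_left_mono)
  then have "vnorm S (mvec S M x) \<le> (\<Sum>a\<in>S. \<Sum>b\<in>S. cmod (M a b) * vnorm S x)"
    by (intro order_trans[OF vnorm_le_sum] sum_mono)
  then show ?thesis by (simp add: sum_distrib_right)
qed

lemma vnorm_mvec_le_opnorm: "finite S \<Longrightarrow> vnorm S x \<le> 1 \<Longrightarrow> vnorm S (mvec S M x) \<le> opnorm S M"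
  unfolding opnorm_def
proof (rule cSup_upper)
  assume S: "finite S"
  show "bdd_above {vnorm S (mvec S M x) | x. vnorm S x \<le> 1}"
    using order_trans[OF vnorm_mvec_le_sum[OF S] mult_left_le]
    by (intro bdd_aboveI[where M="\<Sum>a\<in>S. \<Sum>b\<in>S. cmod (M a b)"]) (auto simp: sum_nonneg)
qed auto

lemma opnorm_least:
  assumes "\<And>x. vnorm S x \<le> 1 \<Longrightarrow> vnorm S (mvec S M x) \<le> K"
  shows "opnorm S M \<le> K"
  unfolding opnorm_def
proof (rule cSup_least)
  show "{vnorm S (mvec S M x) |x. vnorm S x \<le> 1} \<noteq> {}"
    using vnorm_zero[of S] by (metis (mono_tags, lifting) empty_iff mem_Collect_eq zero_le_one)
qed (use assms in auto)

lemma opnorm_nonneg: "finite S \<Longrightarrow> 0 \<le> opnorm S M"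
  using vnorm_mvec_le_opnorm[of S "\<lambda>a. 0" M] vnorm_nonneg[of S] by (metis order_trans vnorm_zero zero_le_one)

lemma vnorm_mvec_le:
  assumes S: "finite S"
  shows "vnorm S (mvec S M x) \<le> opnorm S M * vnorm S x"
proof (cases "vnorm S x = 0")
  case True
  then have "x a = 0" if "a \<in> S" for a
    using norm_le_vnorm[OF S that, of x] by simp
  then have "mvec S M x = (\<lambda>a. 0)" by (auto simp: mvec_def)
  then show ?thesis using True by simp
next
  case False
  then have v: "vnorm S x > 0" using vnorm_nonneg[of S x] by linarith
  have "vnorm S (\<lambda>b. complex_of_real (1 / vnorm S x) * x b) = 1"
    unfolding vnorm_mult_const using v by (simp add: norm_divide)
  then have "vnorm S (mvec S M (\<lambda>b. complex_of_real (1 / vnorm S x) * x b)) \<le> opnorm S M"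
    by (intro vnorm_mvec_le_opnorm[OF S]) simp
  then have "vnorm S (mvec S M x) / vnorm S x \<le> opnorm S M"
    unfolding mvec_mult_const_right vnorm_mult_const using v by (simp add: norm_divide)
  then show ?thesis
    using v by (simp add: divide_le_eq)
qed

lemma opnorm_le_sum: "finite S \<Longrightarrow> opnorm S M \<le> (\<Sum>a\<in>S. \<Sum>b\<in>S. cmod (M a b))"
  by (rule opnorm_least, rule order_trans[OF vnorm_mvec_le_sum])
     (auto simp: mult_left_le sum_nonneg)

lemma norm_entry_le_opnorm:
  assumes S: "finite S" and a: "a \<in> S" and b: "b \<in> S"
  shows "cmod (M a b) \<le> opnorm S M"
proof -
  define x where "x = (\<lambda>c. if c = b then (1::complex) else 0)"
  have "vnorm S x = 1"
    using S b by (simp add: vnorm_def x_def if_distrib[of "\<lambda>z. (cmod z)\<^sup>2"] cong: if_cong)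
  moreover have "mvec S M x a = M a b"
    using S b by (simp add: mvec_def x_def if_distrib[of "\<lambda>z. M a _ * z"] cong: if_cong)
  ultimately show ?thesis
    using norm_le_vnorm[OF S a, of "mvec S M x"] vnorm_mvec_le_opnorm[OF S, of x M] by simp
qed

lemma opnorm_cong:
  assumes "\<And>a b. a \<in> S \<Longrightarrow> b \<in> S \<Longrightarrow> M a b = N a b"
  shows "opnorm S M = opnorm S N"
proof -
  have "vnorm S (mvec S M x) = vnorm S (mvec S N x)" for x
    by (rule vnorm_cong) (simp add: mvec_def assms cong: sum.cong)
  then show ?thesis unfolding opnorm_def by simp
qed

lemma opnorm_add_le:
  assumes S: "finite S"
  shows "opnorm S (\<lambda>a b. M a b + N a b) \<le> opnorm S M + opnorm S N"
proof (rule opnorm_least)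
  fix x assume x: "vnorm S x \<le> 1"
  have "vnorm S (mvec S (\<lambda>a b. M a b + N a b) x) \<le> opnorm S M * vnorm S x + opnorm S N * vnorm S x"
    unfolding mvec_add_left by (intro order_trans[OF vnorm_add_le] add_mono vnorm_mvec_le S)
  also have "\<dots> \<le> opnorm S M + opnorm S N"
    using x opnorm_nonneg[OF S] by (intro add_mono mult_left_le) auto
  finally show "vnorm S (mvec S (\<lambda>a b. M a b + N a b) x) \<le> opnorm S M + opnorm S N" .
qed

lemma opnorm_mult_const_le:
  assumes S: "finite S"
  shows "opnorm S (\<lambda>a b. c * M a b) \<le> cmod c * opnorm S M"
proof (rule opnorm_least)
  fix x assume "vnorm S x \<le> 1"
  then show "vnorm S (mvec S (\<lambda>a b. c * M a b) x) \<le> cmod c * opnorm S M"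
    unfolding mvec_mult_const_left vnorm_mult_const
    by (intro mult_left_mono vnorm_mvec_le_opnorm S) simp_all
qed

lemma opnorm_mdiff_le: "finite S \<Longrightarrow> opnorm S (mdiff M N) \<le> opnorm S M + opnorm S N"
  using opnorm_add_le[of S M "\<lambda>a b. (-1) * N a b"] opnorm_mult_const_le[of S "-1" N]
  by (simp add: mdiff_def)

lemma opnorm_mdiff_triangle:
  "finite S \<Longrightarrow> opnorm S (mdiff M N) \<le> opnorm S (mdiff M P) + opnorm S (mdiff P N)"
  using opnorm_add_le[of S "mdiff M P" "mdiff P N"] by (simp add: mdiff_def)

lemma opnorm_le_opnorm_mdiff: "finite S \<Longrightarrow> opnorm S N \<le> opnorm S M + opnorm S (mdiff M N)"
  using opnorm_mdiff_le[of S M "mdiff M N"] by (simp add: mdiff_def)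

lemma opnorm_heis_le:
  assumes S: "finite S" and h: "hermitian S H"
  shows "opnorm S (heis S H t X) \<le> opnorm S X"
proof (rule opnorm_least)
  fix x assume x: "vnorm S x \<le> 1"
  let ?V = "mexp S (\<lambda>a b. (- \<i> * of_real t) * H a b)"
  have "vnorm S (mvec S (heis S H t X) x) = vnorm S (mvec S X (mvec S ?V x))"
    unfolding heis_def mvec_mmult by (rule vnorm_mvec_mexp_imaginary[OF S h]) simp
  also have "\<dots> \<le> opnorm S X * vnorm S (mvec S ?V x)"
    by (rule vnorm_mvec_le[OF S])
  also have "\<dots> = opnorm S X * vnorm S x"
    by (subst vnorm_mvec_mexp_imaginary[OF S h]) simp_all
  also have "\<dots> \<le> opnorm S X" using x opnorm_nonneg[OF S] by (simp add: mult_left_le)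
  finally show "vnorm S (mvec S (heis S H t X) x) \<le> opnorm S X" .
qed

section \<open>Continuity of the Heisenberg evolution\<close>

lemma continuous_on_mexp:
  assumes "finite S" "a \<in> S"
  shows "continuous_on UNIV (\<lambda>t::real. mexp S (\<lambda>a b. (w * of_real t) * H a b) a b)"
proof -
  have "continuous_on UNIV (\<lambda>z. \<Sum>n. mpow S H n a b / fact n * z ^ n)"
    using isCont_powser_converges_everywhere[OF summable_mexp_series[OF assms]]
    by (simp add: continuous_at_imp_continuous_on)
  then show ?thesis
    unfolding mexp_mult_const_series
    by (rule continuous_on_compose2[of UNIV]) (auto intro!: continuous_intros)
qed

lemma continuous_on_heis:
  assumes "finite S" "a \<in> S"
  shows "continuous_on UNIV (\<lambda>t. heis S H t X a b)"
  unfolding heis_def mmult_def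
  by (intro continuous_on_sum continuous_on_mult continuous_on_const continuous_on_mexp assms)

lemma opnorm_uniformly_continuous_on:
  fixes \<phi> :: "real \<Rightarrow> qop"
  assumes S: "finite S" and K: "compact K" and \<epsilon>: "0 < \<epsilon>"
    and cont: "\<And>a b. a \<in> S \<Longrightarrow> b \<in> S \<Longrightarrow> continuous_on K (\<lambda>t. \<phi> t a b)"
  obtains \<delta> where "0 < \<delta>"
    "\<And>t s. t \<in> K \<Longrightarrow> s \<in> K \<Longrightarrow> dist s t < \<delta> \<Longrightarrow> opnorm S (mdiff (\<phi> t) (\<phi> s)) \<le> \<epsilon>"
proof -
  define D where "D p = (\<Sum>a\<in>S. \<Sum>b\<in>S. cmod (\<phi> (fst p) a b - \<phi> (snd p) a b))" for p
  have "continuous_on (K \<times> K) (\<lambda>p. \<phi> (fst p) a b)" "continuous_on (K \<times> K) (\<lambda>p. \<phi> (snd p) a b)"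
    if "a \<in> S" "b \<in> S" for a b
    using cont[OF that] by (auto intro!: continuous_on_compose2[of K] continuous_intros)
  then have "continuous_on (K \<times> K) D"
    unfolding D_def by (intro continuous_on_sum continuous_on_norm continuous_on_diff) auto
  then have "uniformly_continuous_on (K \<times> K) D"
    by (intro compact_uniformly_continuous compact_Times K)
  then obtain \<delta> where "0 < \<delta>" and \<delta>:
    "\<And>p p'. p \<in> K \<times> K \<Longrightarrow> p' \<in> K \<times> K \<Longrightarrow> dist p' p < \<delta> \<Longrightarrow> dist (D p') (D p) < \<epsilon>"
    using \<epsilon> unfolding uniformly_continuous_on_def by metis
  show thesis
  proof (rule that[OF \<open>0 < \<delta>\<close>])
    fix t s assume "t \<in> K" "s \<in> K" "dist s t < \<delta>"
    then have "dist (D (t, s)) (D (t, t)) < \<epsilon>"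
      by (intro \<delta>) (simp_all add: dist_Pair_Pair)
    then have "D (t, s) \<le> \<epsilon>" by (simp add: D_def dist_real_def)
    then show "opnorm S (mdiff (\<phi> t) (\<phi> s)) \<le> \<epsilon>"
      using opnorm_le_sum[OF S, of "mdiff (\<phi> t) (\<phi> s)"] by (simp add: D_def mdiff_def)
  qed
qed

lemma heis_uniformly_continuous:
  assumes S: "finite S" and h: "hermitian S H" and \<epsilon>: "0 < \<epsilon>"
  obtains \<delta> where "0 < \<delta>" "\<And>t s. t \<in> {-T..T} \<Longrightarrow> s \<in> {-T..T} \<Longrightarrow> \<bar>t - s\<bar> < \<delta> \<Longrightarrow>
    opnorm S (mdiff (heis S H t X) (heis S H s X)) \<le> \<epsilon> * opnorm S X"
proof (cases "opnorm S X = 0")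
  case True
  have "opnorm S (mdiff (heis S H t X) (heis S H s X)) \<le> 0" for t s
    using order_trans[OF opnorm_mdiff_le[OF S] add_mono[OF opnorm_heis_le[OF S h] opnorm_heis_le[OF S h]],
        of t X s X] True by simp
  then show thesis using that[of 1] True by simp
next
  case False
  then have "0 < \<epsilon> * opnorm S X" using \<epsilon> opnorm_nonneg[OF S, of X] by simp
  moreover have "continuous_on {-T..T} (\<lambda>t. heis S H t X a b)" if "a \<in> S" for a b
    using continuous_on_heis[OF S that] by (rule continuous_on_subset) simp
  ultimately obtain \<delta> where "0 < \<delta>" "\<And>t s. t \<in> {-T..T} \<Longrightarrow> s \<in> {-T..T} \<Longrightarrow> dist s t < \<delta> \<Longrightarrow>
      opnorm S (mdiff (heis S H t X) (heis S H s X)) \<le> \<epsilon> * opnorm S X"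
    using opnorm_uniformly_continuous_on[OF S compact_Icc] by metis
  then show thesis using that by (simp add: dist_real_def abs_minus_commute)
qed

section \<open>Localizing filtered evolutions\<close>

lemma mvec_integral:
  assumes "finite S" "a \<in> S" "\<And>b. b \<in> S \<Longrightarrow> integrable lborel (\<lambda>t. F t a b)"
  shows "mvec S (\<lambda>a b. LINT t|lborel. F t a b) x a = (LINT t|lborel. mvec S (F t) x a)"
  unfolding mvec_def using assms by (subst Bochner_Integration.integral_sum) auto

lemma opnorm_integral_le:
  fixes F :: "real \<Rightarrow> qop"
  assumes S: "finite S"
    and F: "\<And>a b. a \<in> S \<Longrightarrow> b \<in> S \<Longrightarrow> integrable lborel (\<lambda>t. F t a b)"
    and h: "integrable lborel h" "\<And>t. opnorm S (F t) \<le> h t"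
  shows "opnorm S (\<lambda>a b. LINT t|lborel. F t a b) \<le> (LINT t|lborel. h t)"
proof (rule opnorm_least)
  fix x assume x: "vnorm S x \<le> 1"
  define y where "y = mvec S (\<lambda>a b. LINT t|lborel. F t a b) x"
  define \<psi> where "\<psi> t = (\<Sum>a\<in>S. cnj (y a) * mvec S (F t) x a)" for t
  have integrable_mvec: "integrable lborel (\<lambda>t. mvec S (F t) x a)" if "a \<in> S" for a
    unfolding mvec_def using F that by auto
  have "complex_of_real ((vnorm S y)\<^sup>2) = (LINT t|lborel. \<psi> t)"
    unfolding of_real_vnorm_squared \<psi>_def using integrable_mvec
    by (subst Bochner_Integration.integral_sum) (auto simp: y_def mvec_integral[OF S _ F])
  then have "(vnorm S y)\<^sup>2 \<le> cmod (LINT t|lborel. \<psi> t)"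
    by (metis Re_complex_of_real complex_Re_le_cmod)
  also have "\<dots> \<le> (LINT t|lborel. cmod (\<psi> t))"
    by (rule integral_norm_bound)
  also have "\<dots> \<le> (LINT t|lborel. vnorm S y * h t)"
  proof (rule integral_mono)
    show "integrable lborel (\<lambda>t. cmod (\<psi> t))"
      unfolding \<psi>_def using integrable_mvec by (intro integrable_norm integrable_sum) auto
    show "integrable lborel (\<lambda>t. vnorm S y * h t)" using h(1) by simp
    fix t
    have "cmod (\<psi> t) \<le> vnorm S y * vnorm S (mvec S (F t) x)"
      unfolding \<psi>_def by (rule norm_sum_cnj_mult_le_vnorm)
    also have "\<dots> \<le> vnorm S y * h t"
      using vnorm_mvec_le[OF S, of "F t" x] mult_left_le[OF x opnorm_nonneg[OF S, of "F t"]] h(2)[of t]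
      by (intro mult_left_mono vnorm_nonneg) linarith
    finally show "cmod (\<psi> t) \<le> vnorm S y * h t" .
  qed
  finally have "vnorm S y * vnorm S y \<le> vnorm S y * (LINT t|lborel. h t)"
    by (simp add: power2_eq_square)
  moreover have "0 \<le> (LINT t|lborel. h t)"
    using h opnorm_nonneg[OF S] by (intro integral_nonneg_AE) (auto intro: order_trans)
  ultimately show "vnorm S (mvec S (\<lambda>a b. LINT t|lborel. F t a b) x) \<le> (LINT t|lborel. h t)"
    unfolding y_def[symmetric] using vnorm_nonneg[of S y]
    by (cases "vnorm S y = 0") auto
qed

lemma supported_on_entrywise:
  fixes Xs :: "'i \<Rightarrow> qop"
  assumes "\<And>k. supported_on Lam dm B (Xs k)" "\<Phi> (\<lambda>k. 0) = 0"
  shows "supported_on Lam dm B (\<lambda>a b. \<Phi> (\<lambda>k. Xs k a b))"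
  unfolding supported_on_def
proof (intro conjI ballI impI)
  fix \<sigma> \<tau> assume "\<sigma> \<in> confs Lam dm" "\<tau> \<in> confs Lam dm" "\<exists>i\<in>Lam - B. \<sigma> i \<noteq> \<tau> i"
  then have "(\<lambda>k. Xs k \<sigma> \<tau>) = (\<lambda>k. 0)"
    using assms(1) unfolding supported_on_def by blast
  then show "\<Phi> (\<lambda>k. Xs k \<sigma> \<tau>) = 0" using assms(2) by simp
next
  fix \<sigma> \<tau> \<sigma>' \<tau>'
  assume "\<sigma> \<in> confs Lam dm" "\<tau> \<in> confs Lam dm" "\<sigma>' \<in> confs Lam dm" "\<tau>' \<in> confs Lam dm"
    "(\<forall>i\<in>B. \<sigma> i = \<sigma>' i \<and> \<tau> i = \<tau>' i) \<and> (\<forall>i\<in>Lam - B. \<sigma> i = \<tau> i \<and> \<sigma>' i = \<tau>' i)"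
  then have "(\<lambda>k. Xs k \<sigma> \<tau>) = (\<lambda>k. Xs k \<sigma>' \<tau>')"
    using assms(1) unfolding supported_on_def by blast
  then show "\<Phi> (\<lambda>k. Xs k \<sigma> \<tau>) = \<Phi> (\<lambda>k. Xs k \<sigma>' \<tau>')" by simp
qed

lemma grid_approximation:
  fixes T \<delta> :: real
  assumes T: "0 < T" and \<delta>: "0 < \<delta>"
  obtains grid :: "nat \<Rightarrow> real" and k :: "real \<Rightarrow> nat" where
    "\<And>n. grid n \<in> {-T..T}" "k \<in> measurable borel (count_space UNIV)"
    "\<And>t. t \<in> {-T..T} \<Longrightarrow> \<bar>t - grid (k t)\<bar> < \<delta>"
proof -
  define N :: nat where "N = nat \<lceil>2 * T / \<delta>\<rceil> + 1"
  define h where "h = 2 * T / real N"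
  define grid where "grid n = - T + real (min n N) * h" for n
  define k where "k t = nat \<lfloor>(t + T) / h\<rfloor>" for t
  have "2 * T / \<delta> < real N" "0 < real N" unfolding N_def by linarith+
  then have h: "0 < h" "h < \<delta>" "real N * h = 2 * T"
    using T \<delta> by (auto simp: h_def field_simps)
  have grid: "grid n \<in> {-T..T}" for n
    using mult_right_mono[of "real (min n N)" "real N" h] h by (auto simp: grid_def)
  have k: "k \<in> measurable borel (count_space UNIV)" unfolding k_def by measurable
  have "\<bar>t - grid (k t)\<bar> < \<delta>" if "t \<in> {-T..T}" for t
  proof -
    define x where "x = (t + T) / h"
    have x: "0 \<le> x" "x \<le> real N" "t = - T + x * h"
      using that h by (auto simp: x_def field_simps)
    then have "min (k t) N = k t" "real (k t) = of_int \<lfloor>x\<rfloor>"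
      unfolding k_def x_def[symmetric] by linarith+
    then have "grid (k t) = - T + of_int \<lfloor>x\<rfloor> * h"
      by (simp add: grid_def)
    then have "t - grid (k t) = x * h - of_int \<lfloor>x\<rfloor> * h"
      using x(3) by linarith
    then have "t - grid (k t) = (x - of_int \<lfloor>x\<rfloor>) * h"
      by (simp add: left_diff_distrib)
    moreover have "0 \<le> x - of_int \<lfloor>x\<rfloor>" "x - of_int \<lfloor>x\<rfloor> < 1" by linarith+
    ultimately show ?thesis
      using h by (simp add: abs_mult) (smt (verit) mult_less_cancel_right1)
  qed
  then show thesis by (rule that[OF grid k])
qed

lemma piecewise_constant_approximation:
  fixes \<phi> :: "real \<Rightarrow> qop" and P :: "qop \<Rightarrow> bool"
  assumes S: "finite S" and T: "0 < T" and \<delta>: "0 < \<delta>"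
    and close: "\<And>t s. t \<in> {-T..T} \<Longrightarrow> s \<in> {-T..T} \<Longrightarrow> \<bar>t - s\<bar> < \<delta> \<Longrightarrow>
      opnorm S (mdiff (\<phi> t) (\<phi> s)) \<le> \<epsilon>"
    and approx: "\<And>t. t \<in> {-T..T} \<Longrightarrow> \<exists>X'. P X' \<and> opnorm S (mdiff (\<phi> t) X') \<le> G"
  obtains Xs :: "nat \<Rightarrow> qop" and k :: "real \<Rightarrow> nat" where
    "\<And>n. P (Xs n)" "\<And>n. \<exists>s\<in>{-T..T}. opnorm S (mdiff (\<phi> s) (Xs n)) \<le> G"
    "k \<in> measurable borel (count_space UNIV)"
    "\<And>t. t \<in> {-T..T} \<Longrightarrow> opnorm S (mdiff (\<phi> t) (Xs (k t))) \<le> \<epsilon> + G"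
proof -
  obtain grid :: "nat \<Rightarrow> real" and k :: "real \<Rightarrow> nat" where grid: "\<And>n. grid n \<in> {-T..T}" and k: "k \<in> measurable borel (count_space UNIV)"
    and near: "\<And>t. t \<in> {-T..T} \<Longrightarrow> \<bar>t - grid (k t)\<bar> < \<delta>"
    using grid_approximation[OF T \<delta>] by blast
  obtain Xs where Xs: "\<And>n. P (Xs n) \<and> opnorm S (mdiff (\<phi> (grid n)) (Xs n)) \<le> G"
    using approx[OF grid] by metis
  show thesis
  proof (rule that[OF _ _ k])
    show "P (Xs n)" for n using Xs by blast
    show "\<exists>s\<in>{-T..T}. opnorm S (mdiff (\<phi> s) (Xs n)) \<le> G" for n using Xs grid by blast
    show "opnorm S (mdiff (\<phi> t) (Xs (k t))) \<le> \<epsilon> + G" if "t \<in> {-T..T}" for t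
      using opnorm_mdiff_triangle[OF S, of "\<phi> t" "Xs (k t)" "\<phi> (grid (k t))"]
        close[OF that grid near[OF that]] Xs[of "k t"] by linarith
  qed
qed

lemma integrable_mult_bounded:
  fixes f g :: "real \<Rightarrow> complex"
  assumes E: "integrable lborel E" and f: "f \<in> borel_measurable borel" "\<And>t. cmod (f t) \<le> E t"
    and g: "g \<in> borel_measurable borel" "\<And>t. cmod (g t) \<le> M"
  shows "integrable lborel (\<lambda>t. f t * g t)"
proof (rule Bochner_Integration.integrable_bound)
  show "integrable lborel (\<lambda>t. M * E t)" using E by simp
  show "(\<lambda>t. f t * g t) \<in> borel_measurable lborel" using f(1) g(1) by simp
  have "norm (f t * g t) \<le> norm (M * E t)" for t
  proof -
    have "norm (f t * g t) \<le> E t * M"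
      unfolding norm_mult using f(2) g(2) by (intro mult_mono) (auto intro: order_trans[OF norm_ge_zero])
    then show ?thesis by (metis abs_ge_self mult.commute order_trans real_norm_def)
  qed
  then show "AE t in lborel. norm (f t * g t) \<le> norm (M * E t)" by simp
qed

lemma opnorm_mdiff_Wfilt_le:
  fixes Gf :: "real \<Rightarrow> complex" and Y :: "real \<Rightarrow> qop"
  assumes S: "finite S" and h: "hermitian S H" and \<gamma>: "0 \<le> \<gamma>"
    and Gf: "(\<lambda>t. Gf (\<gamma> * t)) \<in> borel_measurable borel" "\<And>t. cmod (Gf (\<gamma> * t)) \<le> E t"
    and E: "integrable lborel E"
    and Y: "\<And>a b. (\<lambda>t. Y t a b) \<in> borel_measurable borel" "\<And>t a b. a \<in> S \<Longrightarrow> b \<in> S \<Longrightarrow> cmod (Y t a b) \<le> M"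
    and D: "\<And>t. opnorm S (mdiff (heis S H t X) (Y t)) \<le> D t" "integrable lborel (\<lambda>t. E t * D t)"
  shows "opnorm S (mdiff (Wfilt S H \<gamma> Gf X) (\<lambda>a b. of_real \<gamma> * (LINT t|lborel. Gf (\<gamma> * t) * Y t a b)))
    \<le> \<gamma> * (LINT t|lborel. E t * D t)"
proof -
  have integrable_heis: "integrable lborel (\<lambda>t. Gf (\<gamma> * t) * heis S H t X a b)" if "a \<in> S" "b \<in> S" for a b
    using continuous_on_heis[OF S that(1)]
      order_trans[OF norm_entry_le_opnorm[OF S that] opnorm_heis_le[OF S h]]
    by (intro integrable_mult_bounded[OF E] Gf borel_measurable_continuous_onI)
  have integrable_Y: "integrable lborel (\<lambda>t. Gf (\<gamma> * t) * Y t a b)" if "a \<in> S" "b \<in> S" for a b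
    using Y(2)[OF that] by (intro integrable_mult_bounded[OF E] Gf Y(1))
  define F where "F t = (\<lambda>a b. (of_real \<gamma> * Gf (\<gamma> * t)) * mdiff (heis S H t X) (Y t) a b)" for t
  have "opnorm S (mdiff (Wfilt S H \<gamma> Gf X) (\<lambda>a b. of_real \<gamma> * (LINT t|lborel. Gf (\<gamma> * t) * Y t a b)))
      = opnorm S (\<lambda>a b. LINT t|lborel. F t a b)"
    using integrable_heis integrable_Y
    by (intro opnorm_cong) (simp add: Wfilt_def F_def mdiff_def integral_lborel algebra_simps)
  also have "\<dots> \<le> (LINT t|lborel. \<gamma> * (E t * D t))"
  proof (rule opnorm_integral_le[OF S])
    show "integrable lborel (\<lambda>t. F t a b)" if "a \<in> S" "b \<in> S" for a b
      using integrable_heis[OF that] integrable_Y[OF that] by (simp add: F_def mdiff_def algebra_simps)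
    show "integrable lborel (\<lambda>t. \<gamma> * (E t * D t))" using D(2) by simp
    fix t
    have "cmod (of_real \<gamma> * Gf (\<gamma> * t)) * opnorm S (mdiff (heis S H t X) (Y t)) \<le> (\<gamma> * E t) * D t"
      using mult_left_mono[OF Gf(2)[of t] \<gamma>] \<gamma> order_trans[OF norm_ge_zero Gf(2)[of t]] D(1)[of t]
      by (intro mult_mono) (auto simp: norm_mult intro: opnorm_nonneg[OF S] order_trans)
    then show "opnorm S (F t) \<le> \<gamma> * (E t * D t)"
      unfolding F_def mult.assoc[symmetric] by (rule order_trans[OF opnorm_mult_const_le[OF S]])
  qed
  finally show ?thesis by simp
qed

lemma heis_step_approximation:
  assumes fin: "finite (confs Lam dm)" and herm: "hermitian (confs Lam dm) H"
    and T: "0 < T" and \<epsilon>: "0 < \<epsilon>"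
    and approx: "\<And>t. t \<in> {-T..T} \<Longrightarrow> \<exists>X'. supported_on Lam dm B X' \<and>
      opnorm (confs Lam dm) (mdiff (heis (confs Lam dm) H t X) X') \<le> G"
  obtains Y :: "real \<Rightarrow> qop" where
    "\<And>t. supported_on Lam dm B (Y t)" "\<And>a b. (\<lambda>t. Y t a b) \<in> borel_measurable borel"
    "\<And>t a b. a \<in> confs Lam dm \<Longrightarrow> b \<in> confs Lam dm \<Longrightarrow>
       cmod (Y t a b) \<le> opnorm (confs Lam dm) X + G"
    "\<And>t. opnorm (confs Lam dm) (mdiff (heis (confs Lam dm) H t X) (Y t))
       \<le> \<epsilon> * opnorm (confs Lam dm) X + G + opnorm (confs Lam dm) X * indicator {t. T < \<bar>t\<bar>} t"
proof -
  define S where "S = confs Lam dm"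
  define nX where "nX = opnorm S X"
  have S: "finite S" and h: "hermitian S H" using fin herm by (simp_all add: S_def)
  have nX: "0 \<le> nX" unfolding nX_def by (rule opnorm_nonneg[OF S])
  have G: "0 \<le> G"
    using approx[of 0] T opnorm_nonneg[OF S] by (force simp: S_def intro: order_trans)
  obtain \<delta> where "0 < \<delta>" and close: "\<And>t s. t \<in> {-T..T} \<Longrightarrow> s \<in> {-T..T} \<Longrightarrow> \<bar>t - s\<bar> < \<delta> \<Longrightarrow>
      opnorm S (mdiff (heis S H t X) (heis S H s X)) \<le> \<epsilon> * nX"
    using heis_uniformly_continuous[OF S h \<epsilon>] unfolding nX_def by metis
  obtain Xs and k :: "real \<Rightarrow> nat" where Xs_supp: "\<And>n. supported_on Lam dm B (Xs n)"
    and Xs_near: "\<And>n. \<exists>s\<in>{-T..T}. opnorm S (mdiff (heis S H s X) (Xs n)) \<le> G"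
    and k: "k \<in> measurable borel (count_space UNIV)"
    and Xs_approx: "\<And>t. t \<in> {-T..T} \<Longrightarrow> opnorm S (mdiff (heis S H t X) (Xs (k t))) \<le> \<epsilon> * nX + G"
    using piecewise_constant_approximation[where \<phi>="\<lambda>t. heis S H t X" and P="supported_on Lam dm B",
        OF S T \<open>0 < \<delta>\<close> close approx[folded S_def]] by blast
  define Y where "Y t = (\<lambda>a b. indicator {-T..T} t * Xs (k t) a b)" for t
  show thesis
  proof (rule that[folded S_def nX_def])
    show "supported_on Lam dm B (Y t)" for t
      unfolding Y_def by (rule supported_on_entrywise[OF Xs_supp, where \<Phi>="\<lambda>f. indicator {-T..T} t * f (k t)"]) simp
    show "(\<lambda>t. Y t a b) \<in> borel_measurable borel" for a b
      unfolding Y_def using measurable_compose_countable[OF _ k, of "\<lambda>n t. Xs n a b"] by measurable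
    show "cmod (Y t a b) \<le> nX + G" if "a \<in> S" "b \<in> S" for t a b
    proof -
      obtain s where "opnorm S (mdiff (heis S H s X) (Xs (k t))) \<le> G" using Xs_near by blast
      then have "opnorm S (Xs (k t)) \<le> nX + G"
        using opnorm_le_opnorm_mdiff[OF S, of "Xs (k t)" "heis S H s X"] opnorm_heis_le[OF S h, of s X]
        unfolding nX_def by linarith
      then show ?thesis
        using norm_entry_le_opnorm[OF S that, of "Xs (k t)"] nX G by (auto simp: Y_def indicator_def)
    qed
    show "opnorm S (mdiff (heis S H t X) (Y t)) \<le> \<epsilon> * nX + G + nX * indicator {t. T < \<bar>t\<bar>} t" for t
    proof (cases "t \<in> {-T..T}")
      case True
      then have "indicator {t. T < \<bar>t\<bar>} t = (0::real)" by (auto simp: indicator_def)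
      then show ?thesis using Xs_approx[OF True] True by (simp add: Y_def mdiff_def)
    next
      case False
      then have "opnorm S (mdiff (heis S H t X) (Y t)) = opnorm S (heis S H t X)"
        by (intro opnorm_cong) (simp add: Y_def mdiff_def)
      moreover have "indicator {t. T < \<bar>t\<bar>} t = (1::real)" using False by (auto simp: indicator_def)
      moreover have "0 \<le> \<epsilon> * nX" using \<epsilon> nX by simp
      ultimately show ?thesis
        using opnorm_heis_le[OF S h, of t X] G unfolding nX_def by simp
    qed
  qed
qed

lemma Wfilt_localized:
  fixes Gf :: "real \<Rightarrow> complex" and E :: "real \<Rightarrow> real"
  assumes fin: "finite (confs Lam dm)" and herm: "hermitian (confs Lam dm) H"
    and \<gamma>: "0 < \<gamma>" and T: "0 < T" and \<epsilon>: "0 < \<epsilon>"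
    and Gf: "(\<lambda>t. Gf (\<gamma> * t)) \<in> borel_measurable borel" "\<And>t. cmod (Gf (\<gamma> * t)) \<le> E t"
    and E: "integrable lborel E"
    and approx: "\<And>t. t \<in> {-T..T} \<Longrightarrow> \<exists>X'. supported_on Lam dm B X' \<and>
      opnorm (confs Lam dm) (mdiff (heis (confs Lam dm) H t X) X') \<le> G"
  shows "\<exists>W'. supported_on Lam dm B W' \<and>
    opnorm (confs Lam dm) (mdiff (Wfilt (confs Lam dm) H \<gamma> Gf X) W')
      \<le> \<gamma> * ((\<epsilon> * opnorm (confs Lam dm) X + G) * (LINT t|lborel. E t)
           + opnorm (confs Lam dm) X * (LINT t|lborel. E t * indicator {t. T < \<bar>t\<bar>} t))"
proof -
  define nX where "nX = opnorm (confs Lam dm) X"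
  obtain Y where Y_supp: "\<And>t. supported_on Lam dm B (Y t)"
    and Y: "\<And>a b. (\<lambda>t. Y t a b) \<in> borel_measurable borel"
      "\<And>t a b. a \<in> confs Lam dm \<Longrightarrow> b \<in> confs Lam dm \<Longrightarrow> cmod (Y t a b) \<le> nX + G"
      "\<And>t. opnorm (confs Lam dm) (mdiff (heis (confs Lam dm) H t X) (Y t))
         \<le> \<epsilon> * nX + G + nX * indicator {t. T < \<bar>t\<bar>} t"
    using heis_step_approximation[OF fin herm T \<epsilon> approx] unfolding nX_def by blast
  define W' where "W' = (\<lambda>a b. of_real \<gamma> * (LINT t|lborel. Gf (\<gamma> * t) * Y t a b))"
  have "supported_on Lam dm B W'"
    unfolding W'_def
    by (rule supported_on_entrywise[OF Y_supp, where \<Phi>="\<lambda>f. of_real \<gamma> * (LINT t|lborel. Gf (\<gamma> * t) * f t)"])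
       simp
  have tail: "integrable lborel (\<lambda>t. E t * indicator {t. T < \<bar>t\<bar>} t)"
    using E by (intro integrable_real_mult_indicator) auto
  have "integrable lborel (\<lambda>t. E t * (\<epsilon> * nX + G) + nX * (E t * indicator {t. T < \<bar>t\<bar>} t))"
    using E tail by (intro Bochner_Integration.integrable_add Bochner_Integration.integrable_mult_left
        Bochner_Integration.integrable_mult_right)
  then have weight: "integrable lborel (\<lambda>t. E t * (\<epsilon> * nX + G + nX * indicator {t. T < \<bar>t\<bar>} t))"
    by (simp add: algebra_simps)
  have "opnorm (confs Lam dm) (mdiff (Wfilt (confs Lam dm) H \<gamma> Gf X) W')
      \<le> \<gamma> * (LINT t|lborel. E t * (\<epsilon> * nX + G + nX * indicator {t. T < \<bar>t\<bar>} t))"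
    unfolding W'_def by (rule opnorm_mdiff_Wfilt_le[OF fin herm less_imp_le[OF \<gamma>] Gf E Y weight])
  also have "\<dots> = \<gamma> * ((\<epsilon> * nX + G) * (LINT t|lborel. E t) + nX * (LINT t|lborel. E t * indicator {t. T < \<bar>t\<bar>} t))"
    using E tail by (simp add: algebra_simps)
  finally show ?thesis
    using \<open>supported_on Lam dm B W'\<close> unfolding nX_def by blast
qed

section \<open>Gaussian integrals and the filter \<open>fq\<close>\<close>

lemma has_bochner_integral_gaussian:
  fixes \<kappa> :: real
  assumes "0 < \<kappa>"
  shows "has_bochner_integral lborel (\<lambda>t. exp (- (\<kappa> * t\<^sup>2))) (sqrt (pi / \<kappa>))"
proof -
  define \<sigma> where "\<sigma> = sqrt (1 / (2 * \<kappa>))"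
  have \<sigma>: "0 < \<sigma>" "\<sigma>\<^sup>2 = 1 / (2 * \<kappa>)" using assms by (simp_all add: \<sigma>_def)
  have "exp (- (\<kappa> * t\<^sup>2)) = sqrt (pi / \<kappa>) * normal_density 0 \<sigma> t" for t
    using assms by (simp add: normal_density_def \<sigma>(2) real_sqrt_divide field_simps)
  moreover have "has_bochner_integral lborel (normal_density 0 \<sigma>) 1"
    using \<sigma>(1) by (simp add: has_bochner_integral_iff)
  ultimately show ?thesis
    using has_bochner_integral_mult_right[where c="sqrt (pi / \<kappa>)"] by fastforce
qed

lemma nn_integral_gaussian_tail_atLeast:
  fixes \<kappa> c :: real
  assumes k: "0 < \<kappa>" and c: "0 < c"
  shows "(\<integral>\<^sup>+t. ennreal (exp (- (\<kappa> * t\<^sup>2))) * indicator {c..} t \<partial>lborel)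
    \<le> ennreal (exp (- (\<kappa> * c\<^sup>2)) / (2 * \<kappa> * c))"
proof -
  have "(\<integral>\<^sup>+t. ennreal (exp (- (\<kappa> * t\<^sup>2))) * indicator {c..} t \<partial>lborel)
      \<le> (\<integral>\<^sup>+t. ennreal (t / c * exp (- (\<kappa> * t\<^sup>2))) * indicator {c..} t \<partial>lborel)"
    using c by (intro nn_integral_mono)
      (auto split: split_indicator intro!: ennreal_leI simp: field_simps mult_left_mono)
  also have "\<dots> = ennreal (0 - (- exp (- (\<kappa> * c\<^sup>2)) / (2 * \<kappa> * c)))"
  proof (rule nn_integral_FTC_atLeast[where F="\<lambda>t. - exp (- (\<kappa> * t\<^sup>2)) / (2 * \<kappa> * c)"])
    show "((\<lambda>t. - exp (- (\<kappa> * t\<^sup>2)) / (2 * \<kappa> * c)) \<longlongrightarrow> 0) at_top"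
      using k c by real_asymp
  qed (use k c in \<open>auto intro!: derivative_eq_intros simp: field_simps power2_eq_square\<close>)
  finally show ?thesis by simp
qed

lemma gaussian_tail_integral:
  fixes \<kappa> c :: real
  assumes k: "0 < \<kappa>" and c: "0 < c"
  shows "integrable lborel (\<lambda>t. exp (- (\<kappa> * t\<^sup>2)) * indicator {t. c < \<bar>t\<bar>} t)"
    and "(LINT t|lborel. exp (- (\<kappa> * t\<^sup>2)) * indicator {t. c < \<bar>t\<bar>} t) \<le> exp (- (\<kappa> * c\<^sup>2)) / (\<kappa> * c)"
proof -
  let ?E = "\<lambda>t. exp (- (\<kappa> * t\<^sup>2))"
  show int: "integrable lborel (\<lambda>t. ?E t * indicator {t. c < \<bar>t\<bar>} t)"
    using integrable.intros[OF has_bochner_integral_gaussian[OF k]]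
    by (intro integrable_real_mult_indicator) auto
  have mirror: "(\<integral>\<^sup>+t. ennreal (?E t) * indicator {..-c} t \<partial>lborel)
      = (\<integral>\<^sup>+t. ennreal (?E t) * indicator {c..} t \<partial>lborel)"
    by (subst nn_integral_real_affine[where c="-1" and t=0])
       (auto intro!: nn_integral_cong split: split_indicator)
  have "ennreal (LINT t|lborel. ?E t * indicator {t. c < \<bar>t\<bar>} t)
      = (\<integral>\<^sup>+t. ennreal (?E t * indicator {t. c < \<bar>t\<bar>} t) \<partial>lborel)"
    using int by (intro nn_integral_eq_integral[symmetric]) auto
  also have "\<dots> \<le> (\<integral>\<^sup>+t. ennreal (?E t) * indicator {c..} t + ennreal (?E t) * indicator {..-c} t \<partial>lborel)"
    by (intro nn_integral_mono) (auto split: split_indicator)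
  also have "\<dots> = (\<integral>\<^sup>+t. ennreal (?E t) * indicator {c..} t \<partial>lborel)
      + (\<integral>\<^sup>+t. ennreal (?E t) * indicator {c..} t \<partial>lborel)"
    by (simp add: nn_integral_add mirror)
  also have "\<dots> \<le> ennreal (exp (- (\<kappa> * c\<^sup>2)) / (2 * \<kappa> * c)) + ennreal (exp (- (\<kappa> * c\<^sup>2)) / (2 * \<kappa> * c))"
    by (intro add_mono nn_integral_gaussian_tail_atLeast k c)
  also have "\<dots> = ennreal (exp (- (\<kappa> * c\<^sup>2)) / (\<kappa> * c))"
    using k c by (simp add: ennreal_plus[symmetric] del: ennreal_plus)
  finally show "(LINT t|lborel. ?E t * indicator {t. c < \<bar>t\<bar>} t) \<le> exp (- (\<kappa> * c\<^sup>2)) / (\<kappa> * c)"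
    using k c by (simp add: ennreal_le_iff)
qed

lemma exp_diff_eq_sin: "exp (\<i> * of_real x) - exp (- (\<i> * of_real x)) = 2 * \<i> * of_real (sin x)"
proof -
  have "exp (- (\<i> * of_real x)) = exp (\<i> * of_real (- x))" by simp
  then show ?thesis by (simp only: cis_conv_exp[symmetric]) (simp add: complex_eq_iff)
qed

lemma norm_fq_le:
  assumes "0 < q"
  shows "cmod (fq q s) \<le> 3/2 * exp (- s\<^sup>2 / (2 * q))"
proof (cases "s = 0")
  case False
  have "cmod (fq q s) = exp (- s\<^sup>2 / (2 * q)) * (2 * \<bar>sin (3 * s / 4)\<bar>) / \<bar>s\<bar>"
    unfolding fq_def exp_diff_eq_sin by (simp add: norm_mult norm_divide)
  also have "\<dots> \<le> exp (- s\<^sup>2 / (2 * q)) * (2 * \<bar>3 * s / 4\<bar>) / \<bar>s\<bar>"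
    by (intro divide_right_mono mult_left_mono abs_sin_x_le_abs_x) simp_all
  also have "\<dots> = 3/2 * exp (- s\<^sup>2 / (2 * q))" using False by (simp add: abs_mult)
  finally show ?thesis .
qed (simp add: fq_def)

lemma fq_kernel_bounds:
  assumes \<gamma>: "0 < \<gamma>" and q: "0 < q" and T: "0 < T"
  defines "E \<equiv> \<lambda>t. 3/2 * exp (- ((\<gamma>\<^sup>2 / (2 * q)) * t\<^sup>2))"
  shows "\<And>t. cmod (fq q (\<gamma> * t)) \<le> E t" and "integrable lborel E"
    and "\<gamma> * (LINT t|lborel. E t) \<le> 6 * sqrt q"
    and "\<gamma> * (LINT t|lborel. E t * indicator {t. T < \<bar>t\<bar>} t) \<le> 3 * q / (\<gamma> * T) * exp (- (\<gamma> * T)\<^sup>2 / (2 * q))"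
proof -
  define \<kappa> where "\<kappa> = \<gamma>\<^sup>2 / (2 * q)"
  have \<kappa>: "0 < \<kappa>" using \<gamma> q by (simp add: \<kappa>_def)
  show "cmod (fq q (\<gamma> * t)) \<le> E t" for t
    using norm_fq_le[OF q, of "\<gamma> * t"] by (simp add: E_def power_mult_distrib)
  have gauss: "has_bochner_integral lborel E (3/2 * sqrt (pi / \<kappa>))"
    unfolding E_def \<kappa>_def[symmetric]
    by (intro has_bochner_integral_mult_right has_bochner_integral_gaussian \<kappa>)
  then show "integrable lborel E" by (rule integrable.intros)
  have "\<gamma> * (LINT t|lborel. E t) = 3/2 * sqrt (2 * pi) * sqrt q"
    using has_bochner_integral_integral_eq[OF gauss] \<gamma> q
    by (simp add: \<kappa>_def real_sqrt_divide real_sqrt_mult field_simps)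
  also have "\<dots> \<le> 6 * sqrt q"
    using pi_less_4 real_sqrt_le_mono[of "2 * pi" 16] mult_right_mono[of "sqrt (2 * pi)" 4 "sqrt q"] q
    by (simp add: mult.commute)
  finally show "\<gamma> * (LINT t|lborel. E t) \<le> 6 * sqrt q" .
  have "\<gamma> * (LINT t|lborel. E t * indicator {t. T < \<bar>t\<bar>} t)
      = \<gamma> * (3/2 * (LINT t|lborel. exp (- (\<kappa> * t\<^sup>2)) * indicator {t. T < \<bar>t\<bar>} t))"
    by (simp add: E_def \<kappa>_def mult.assoc)
  also have "\<dots> \<le> \<gamma> * (3/2 * (exp (- (\<kappa> * T\<^sup>2)) / (\<kappa> * T)))"
    using gaussian_tail_integral(2)[OF \<kappa> T] \<gamma> by (intro mult_left_mono) simp_all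
  also have "\<dots> = 3 * q / (\<gamma> * T) * exp (- (\<gamma> * T)\<^sup>2 / (2 * q))"
    using \<gamma> q T by (simp add: \<kappa>_def power_mult_distrib field_simps power2_eq_square)
  finally show "\<gamma> * (LINT t|lborel. E t * indicator {t. T < \<bar>t\<bar>} t)
      \<le> 3 * q / (\<gamma> * T) * exp (- (\<gamma> * T)\<^sup>2 / (2 * q))" .
qed

lemma Wfilt_fq_localized:
  assumes fin: "finite (confs Lam dm)" and herm: "hermitian (confs Lam dm) H"
    and \<gamma>: "0 < \<gamma>" and q: "0 < q" and T: "0 < T" and \<epsilon>: "0 < \<epsilon>"
    and approx: "\<And>t. t \<in> {-T..T} \<Longrightarrow> \<exists>X'. supported_on Lam dm B X' \<and>
      opnorm (confs Lam dm) (mdiff (heis (confs Lam dm) H t X) X') \<le> G"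
  shows "\<exists>W'. supported_on Lam dm B W' \<and>
    opnorm (confs Lam dm) (mdiff (Wfilt (confs Lam dm) H \<gamma> (fq q) X) W')
      \<le> 6 * sqrt q * (\<epsilon> * opnorm (confs Lam dm) X + G)
         + 3 * q / (\<gamma> * T) * exp (- (\<gamma> * T)\<^sup>2 / (2 * q)) * opnorm (confs Lam dm) X"
proof -
  define nX where "nX = opnorm (confs Lam dm) X"
  define E where "E t = 3/2 * exp (- ((\<gamma>\<^sup>2 / (2 * q)) * t\<^sup>2))" for t
  note E = fq_kernel_bounds[OF \<gamma> q T, folded E_def]
  have "0 \<le> nX" "0 \<le> G"
    using approx[of 0] T opnorm_nonneg[OF fin] by (force simp: nX_def intro: order_trans)+
  have "(\<lambda>t. fq q (\<gamma> * t)) \<in> borel_measurable borel"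
    unfolding fq_def by measurable
  from Wfilt_localized[OF fin herm \<gamma> T \<epsilon> this E(1,2) approx]
  obtain W' where "supported_on Lam dm B W'" and W':
    "opnorm (confs Lam dm) (mdiff (Wfilt (confs Lam dm) H \<gamma> (fq q) X) W')
      \<le> (\<epsilon> * nX + G) * (\<gamma> * (LINT t|lborel. E t)) + nX * (\<gamma> * (LINT t|lborel. E t * indicator {t. T < \<bar>t\<bar>} t))"
    unfolding nX_def by (auto simp: algebra_simps)
  note W'
  also have "(\<epsilon> * nX + G) * (\<gamma> * (LINT t|lborel. E t)) + nX * (\<gamma> * (LINT t|lborel. E t * indicator {t. T < \<bar>t\<bar>} t))
      \<le> (\<epsilon> * nX + G) * (6 * sqrt q) + nX * (3 * q / (\<gamma> * T) * exp (- (\<gamma> * T)\<^sup>2 / (2 * q)))"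
    using \<epsilon> \<open>0 \<le> nX\<close> \<open>0 \<le> G\<close> by (intro add_mono mult_left_mono E(3,4)) auto
  finally show ?thesis
    using \<open>supported_on Lam dm B W'\<close> unfolding nX_def by (auto simp: algebra_simps)
qed

section \<open>The lattice setting\<close>

lemma finite_confs:
  assumes "finite Lam"
  shows "finite (confs Lam dm)"
proof (rule finite_subset)
  show "confs Lam dm \<subseteq> (\<lambda>f i. if i \<in> Lam then f i else 0) ` (\<Pi>\<^sub>E i\<in>Lam. {..<dm i})"
  proof
    fix \<sigma> assume \<sigma>: "\<sigma> \<in> confs Lam dm"
    then have "\<sigma> = (\<lambda>i. if i \<in> Lam then restrict \<sigma> Lam i else 0)"
      by (auto simp: confs_def)
    moreover have "restrict \<sigma> Lam \<in> (\<Pi>\<^sub>E i\<in>Lam. {..<dm i})" using \<sigma> by (auto simp: confs_def)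
    ultimately show "\<sigma> \<in> (\<lambda>f i. if i \<in> Lam then f i else 0) ` (\<Pi>\<^sub>E i\<in>Lam. {..<dm i})" by blast
  qed
qed (use assms in \<open>intro finite_imageI finite_PiE, auto\<close>)

lemma hermitian_ham_sum:
  assumes "local_hamiltonian Lam dd dm Zs HZ R J"
  shows "hermitian (confs Lam dm) (ham_sum Lam dm Zs HZ)"
  unfolding hermitian_def ham_sum_def cnj_sum
proof (intro ballI sum.cong refl)
  fix a b Z assume "a \<in> confs Lam dm" "b \<in> confs Lam dm" "Z \<in> Zs"
  then show "HZ Z a b = cnj (HZ Z b a)"
    using assms unfolding local_hamiltonian_def hermitian_def by blast
qed

lemma lieb_robinson_approximation:
  assumes LR: "lieb_robinson_bound Lam dd dm H v g" and fin: "finite (confs Lam dm)"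
    and A: "A \<subseteq> Lam" "supported_on Lam dm A X" and l: "0 < l" and v: "0 < v"
    and t: "t \<in> {-(l / v)..l / v}"
  shows "\<exists>X'. supported_on Lam dm (bnbhd Lam dd l A) X' \<and>
    opnorm (confs Lam dm) (mdiff (heis (confs Lam dm) H t X) X') \<le> g l * real (card A) * opnorm (confs Lam dm) X"
proof -
  define G where "G = g l * real (card A) * opnorm (confs Lam dm) X"
  have LR_at: "\<exists>X'. supported_on Lam dm (bnbhd Lam dd l A) X' \<and>
      opnorm (confs Lam dm) (mdiff (heis (confs Lam dm) H s X) X') \<le> (v * \<bar>s\<bar> / l) * G"
    if "\<bar>s\<bar> \<le> l / v" for s
    using LR A l that unfolding lieb_robinson_bound_def G_def by (simp add: mult.assoc)
  (* nothing forces g l \<ge> 0, but the bound at the light-cone time |t| = l/v does force G \<ge> 0 *)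
  obtain X0 where "opnorm (confs Lam dm) (mdiff (heis (confs Lam dm) H (l / v) X) X0) \<le> (v * \<bar>l / v\<bar> / l) * G"
    using LR_at[of "l / v"] l v by auto
  moreover have "v * \<bar>l / v\<bar> / l = 1" using l v by simp
  ultimately have "0 \<le> G" using opnorm_nonneg[OF fin] by (metis mult_1 order_trans)
  moreover have "\<bar>t\<bar> \<le> l / v" using t by auto
  then have "v * \<bar>t\<bar> / l \<le> 1" using l v by (simp add: field_simps)
  ultimately have "(v * \<bar>t\<bar> / l) * G \<le> G" using l v by (intro mult_left_le_one_le) auto
  moreover obtain X' where "supported_on Lam dm (bnbhd Lam dd l A) X'"
      "opnorm (confs Lam dm) (mdiff (heis (confs Lam dm) H t X) X') \<le> (v * \<bar>t\<bar> / l) * G"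
    using LR_at[OF \<open>\<bar>t\<bar> \<le> l / v\<close>] by blast
  ultimately show ?thesis unfolding G_def by (meson order_trans)
qed

theorem corollary1:
  shows "\<exists>C::real. \<forall>(Lam::nat set) (dd::nat \<Rightarrow> nat \<Rightarrow> real) (dm::nat \<Rightarrow> nat)
      (Zs::nat set set) (HZ::nat set \<Rightarrow> qop) (R::real) (J::real) (v::real) (g::real \<Rightarrow> real)
      (\<gamma>::real) (q::real) (A::nat set) (X::qop) (l::real).
    metric_lattice Lam dd dm \<and> R > 0 \<and> local_hamiltonian Lam dd dm Zs HZ R J \<and>
    v > 0 \<and> faster_than_exp g R \<and>
    lieb_robinson_bound Lam dd dm (ham_sum Lam dm Zs HZ) v g \<and>
    \<gamma> > 0 \<and> q > 0 \<and> A \<subseteq> Lam \<and> supported_on Lam dm A X \<and> l > 0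
    \<longrightarrow> (\<exists>W'. supported_on Lam dm (bnbhd Lam dd l A) W' \<and>
          opnorm (confs Lam dm)
            (mdiff (Wfilt (confs Lam dm) (ham_sum Lam dm Zs HZ) \<gamma> (fq q) X) W')
          \<le> (C * q / (l * \<gamma> / v) * exp (- (l * \<gamma> / v)\<^sup>2 / (2 * q))
              + C * sqrt q * g l * real (card A)) * opnorm (confs Lam dm) X)"
proof (intro exI[of _ 6] allI impI, elim conjE)
  fix Lam :: "nat set" and dd :: "nat \<Rightarrow> nat \<Rightarrow> real" and dm :: "nat \<Rightarrow> nat"
    and Zs :: "nat set set" and HZ :: "nat set \<Rightarrow> qop" and R J v :: real and g :: "real \<Rightarrow> real"
    and \<gamma> q :: real and A :: "nat set" and X :: qop and l :: real
  assume lattice: "metric_lattice Lam dd dm" and H: "local_hamiltonian Lam dd dm Zs HZ R J"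
    and v: "v > 0" and LR: "lieb_robinson_bound Lam dd dm (ham_sum Lam dm Zs HZ) v g"
    and \<gamma>: "\<gamma> > 0" and q: "q > 0" and A: "A \<subseteq> Lam" "supported_on Lam dm A X" and l: "l > 0"
  define L where "L = l * \<gamma> / v"
  (* the grid error 6 sqrt q * eps * |X| then equals the Gaussian tail term *)
  define \<epsilon> where "\<epsilon> = q / (2 * sqrt q * L) * exp (- L\<^sup>2 / (2 * q))"
  have fin: "finite (confs Lam dm)"
    using lattice by (intro finite_confs) (simp add: metric_lattice_def)
  have "0 < L" "0 < l / v" "\<gamma> * (l / v) = L" using l v \<gamma> by (simp_all add: L_def)
  then have "0 < \<epsilon>" using q by (simp add: \<epsilon>_def)
  from Wfilt_fq_localized[OF fin hermitian_ham_sum[OF H] \<gamma> q \<open>0 < l / v\<close> this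
       lieb_robinson_approximation[OF LR fin A l v]]
  show "\<exists>W'. supported_on Lam dm (bnbhd Lam dd l A) W' \<and>
      opnorm (confs Lam dm) (mdiff (Wfilt (confs Lam dm) (ham_sum Lam dm Zs HZ) \<gamma> (fq q) X) W')
      \<le> (6 * q / (l * \<gamma> / v) * exp (- (l * \<gamma> / v)\<^sup>2 / (2 * q))
          + 6 * sqrt q * g l * real (card A)) * opnorm (confs Lam dm) X"
    unfolding L_def[symmetric] \<open>\<gamma> * (l / v) = L\<close> using q
    by (simp add: \<epsilon>_def algebra_simps)
qed

end
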